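(* Let $P$ be a finite poset of dimension $2$ such that no strong copy of $P$ in a two-dimensional grid $[k]\times[l]$ contains two neighboring points. Then for all $k,l\ge1$, $sat^*([k]\times[l],P)\ge\max\{k,l\}$.
   Context: $[k]\times[l]$ is ordered coordinatewise. Two points of $[k]\times[l]$ are neighboring if they agree in one coordinate and differ by exactly $1$ in the other. The dimension of a poset $P$ is the least $d$ such that there are $d$ linear orders $\pi_1,\dots,\pi_d$ of $P$ with $p<_Pq$ iff $\pi_i(p)<\pi_i(q)$ for all $i$. A strong copy of $P$ in a poset $R$ is the image of an injection $i:P\to R$ with $p\le_P p'\iff i(p)\le_R i(p')$. A subset $F\subseteq Q$ is strong $P$-saturated if $F$ contains no strong copy of $P$ but for every $x\in Q\setminus F$, $F\cup\{x\}$ contains a strong copy of $P$; $sat^*(Q,P)$ is the minimum size of a strong $P$-saturated subset of $Q$. *)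

theory Defs
  imports Main
begin

text \<open>A linear order of P is represented by an injective map into nat.
  A realizer of the strict order lt is a list of such maps whose intersection is lt.\<close>
definition realizer :: "('a \<Rightarrow> 'a \<Rightarrow> bool) \<Rightarrow> ('a \<Rightarrow> nat) list \<Rightarrow> bool" where
  "realizer lt L \<longleftrightarrow> (\<forall>\<pi>\<in>set L. inj \<pi>) \<and>
     (\<forall>p q. lt p q \<longleftrightarrow> (\<forall>\<pi>\<in>set L. \<pi> p < \<pi> q))"

definition order_dim :: "('a \<Rightarrow> 'a \<Rightarrow> bool) \<Rightarrow> nat" where
  "order_dim lt = (LEAST d. \<exists>L. length L = d \<and> realizer lt L)"

definition grid :: "nat \<Rightarrow> nat \<Rightarrow> (nat \<times> nat) set" where
  "grid k l = {1..k} \<times> {1..l}"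

definition grid_le :: "nat \<times> nat \<Rightarrow> nat \<times> nat \<Rightarrow> bool" where
  "grid_le x y \<longleftrightarrow> fst x \<le> fst y \<and> snd x \<le> snd y"

definition neighboring :: "nat \<times> nat \<Rightarrow> nat \<times> nat \<Rightarrow> bool" where
  "neighboring x y \<longleftrightarrow>
     (fst x = fst y \<and> (snd x = snd y + 1 \<or> snd y = snd x + 1)) \<or>
     (snd x = snd y \<and> (fst x = fst y + 1 \<or> fst y = fst x + 1))"

text \<open>i is a strong embedding of the poset (UNIV :: 'a, le) into the subset F of the grid order;
  its image is a strong copy of P contained in F.\<close>
definition strong_emb :: "('a \<Rightarrow> 'a \<Rightarrow> bool) \<Rightarrow> ('a \<Rightarrow> nat \<times> nat) \<Rightarrow> (nat \<times> nat) set \<Rightarrow> bool" where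
  "strong_emb le i F \<longleftrightarrow> inj i \<and> range i \<subseteq> F \<and>
     (\<forall>p p'. le p p' \<longleftrightarrow> grid_le (i p) (i p'))"

definition contains_strong_copy :: "('a \<Rightarrow> 'a \<Rightarrow> bool) \<Rightarrow> (nat \<times> nat) set \<Rightarrow> bool" where
  "contains_strong_copy le F \<longleftrightarrow> (\<exists>i. strong_emb le i F)"

definition strong_saturated :: "('a \<Rightarrow> 'a \<Rightarrow> bool) \<Rightarrow> (nat \<times> nat) set \<Rightarrow> (nat \<times> nat) set \<Rightarrow> bool" where
  "strong_saturated le Q F \<longleftrightarrow> F \<subseteq> Q \<and> \<not> contains_strong_copy le F \<and>
     (\<forall>x\<in>Q - F. contains_strong_copy le (insert x F))"

definition sat_star :: "(nat \<times> nat) set \<Rightarrow> ('a \<Rightarrow> 'a \<Rightarrow> bool) \<Rightarrow> nat" where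
  "sat_star Q le = Inf {card F | F. strong_saturated le Q F}"

end

theory Submission
  imports Defs
begin

text \<open>In a strong \<open>P\<close>-saturated set \<open>F\<close> every column of the grid meets \<open>F\<close>, and by
  transposition so does every row; hence \<open>|F| \<ge> max k l\<close>. If a column were empty, some empty
  column \<open>b\<close> would be adjacent to an occupied column; let \<open>y\<close> be its lowest point if that
  column lies to the right of \<open>b\<close> and its highest point if it lies to the left, and \<open>x\<close> the
  point of column \<open>b\<close> in the row of \<open>y\<close>. Adding \<open>x\<close> creates a copy of \<open>P\<close> through \<open>x\<close>,
  which avoids the neighbour \<open>y\<close>. Since column \<open>b\<close> is empty and \<open>y\<close> is extreme, \<open>x\<close> and \<open>y\<close>
  compare alike with every other point of \<open>F\<close>, so moving the copy from \<open>x\<close> to \<open>y\<close> gives a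
  copy inside \<open>F\<close>. Dimension 2 only enters through \<open>|P| \<ge> 2\<close>, which rules out \<open>F = {}\<close>.\<close>

lemma finite_grid: "finite (grid k l)"
  unfolding grid_def by simp

lemma ex_distinct_if_order_dim_ge_2:
  assumes "2 \<le> order_dim ((<) :: 'a::order \<Rightarrow> 'a \<Rightarrow> bool)"
  shows "\<exists>u v :: 'a. u \<noteq> v"
proof (rule ccontr)
  assume "\<nexists>u v :: 'a. u \<noteq> v"
  then have "realizer ((<) :: 'a \<Rightarrow> 'a \<Rightarrow> bool) [\<lambda>_. 0]"
    unfolding realizer_def inj_def by (auto, metis less_irrefl)
  then have "order_dim ((<) :: 'a \<Rightarrow> 'a \<Rightarrow> bool) \<le> 1"
    unfolding order_dim_def by (intro Least_le exI[of _ "[\<lambda>_. 0]"]) simp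
  with assms show False
    by simp
qed

lemma ex_strong_saturated:
  assumes "finite Q"
  shows "\<exists>F. strong_saturated le Q F"
proof -
  define free where "free = {G. G \<subseteq> Q \<and> \<not> contains_strong_copy le G}"
  \<comment> \<open>HOL types are nonempty, so no embedding has its range in \<open>{}\<close>.\<close>
  have "{} \<in> free"
    unfolding free_def contains_strong_copy_def strong_emb_def by auto
  moreover have "finite free"
    using assms unfolding free_def by simp
  ultimately obtain F where F: "F \<in> free" and maximal: "\<And>G. G \<in> free \<Longrightarrow> F \<subseteq> G \<Longrightarrow> F = G"
    using finite_has_maximal[of free] by blast
  have "contains_strong_copy le (insert x F)" if "x \<in> Q - F" for x
    using F maximal[of "insert x F"] that unfolding free_def by blast
  with F show ?thesis
    unfolding strong_saturated_def free_def by blast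
qed

lemma sat_star_lower_bound:
  assumes "\<exists>F. strong_saturated le Q F"
    and "\<And>F. strong_saturated le Q F \<Longrightarrow> n \<le> card F"
  shows "n \<le> sat_star Q le"
  unfolding sat_star_def using assms by (intro cInf_greatest) auto

lemma strong_emb_exchange:
  assumes emb: "strong_emb le i (insert x F)" and "i e = x" and "y \<in> F" and "y \<notin> range i"
    and same: "\<And>z. z \<in> F - {y} \<Longrightarrow> (grid_le x z \<longleftrightarrow> grid_le y z) \<and> (grid_le z x \<longleftrightarrow> grid_le z y)"
  shows "strong_emb le (i(e := y)) F"
proof -
  have "inj i" and range_i: "range i \<subseteq> insert x F"
    and ord: "\<And>p q. le p q \<longleftrightarrow> grid_le (i p) (i q)"
    using emb unfolding strong_emb_def by auto
  have others: "i v \<in> F - {y}" if "v \<noteq> e" for v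
    using that \<open>i e = x\<close> \<open>y \<notin> range i\<close> range_i injD[OF \<open>inj i\<close>, of v e] by auto
  have "inj (i(e := y))"
    using \<open>inj i\<close> others unfolding inj_def by (metis DiffD2 fun_upd_other fun_upd_same singletonI)
  moreover have "range (i(e := y)) \<subseteq> F"
    using others \<open>y \<in> F\<close> by auto
  moreover have "le p q \<longleftrightarrow> grid_le ((i(e := y)) p) ((i(e := y)) q)" for p q
    using ord[of p q] same[OF others[of q]] same[OF others[of p]] \<open>i e = x\<close>
    by (cases "p = e"; cases "q = e") (auto simp: grid_le_def)
  ultimately show ?thesis
    unfolding strong_emb_def by blast
qed

lemma strong_saturated_no_exchange:
  assumes sat: "strong_saturated le Q F"
    and spread: "\<And>i p q. strong_emb le i Q \<Longrightarrow> \<not> neighboring (i p) (i q)"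
    and "x \<in> Q - F" and "y \<in> F" and "neighboring x y"
    and same: "\<And>z. z \<in> F - {y} \<Longrightarrow> (grid_le x z \<longleftrightarrow> grid_le y z) \<and> (grid_le z x \<longleftrightarrow> grid_le z y)"
  shows False
proof -
  have "F \<subseteq> Q" and no_copy: "\<not> contains_strong_copy le F"
    using sat unfolding strong_saturated_def by auto
  obtain i where emb: "strong_emb le i (insert x F)"
    using sat \<open>x \<in> Q - F\<close> unfolding strong_saturated_def contains_strong_copy_def by blast
  have "x \<in> range i"
    using emb no_copy unfolding contains_strong_copy_def strong_emb_def by blast
  then obtain e where "i e = x" by blast
  have "strong_emb le i Q"
    using emb \<open>F \<subseteq> Q\<close> \<open>x \<in> Q - F\<close> unfolding strong_emb_def by blast
  then have "y \<notin> range i"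
    using spread \<open>i e = x\<close> \<open>neighboring x y\<close> by blast
  then have "strong_emb le (i(e := y)) F"
    using strong_emb_exchange[OF emb \<open>i e = x\<close> \<open>y \<in> F\<close> _ same] by blast
  with no_copy show False
    unfolding contains_strong_copy_def by blast
qed

lemma finite_grid_column:
  assumes "F \<subseteq> grid k l"
  shows "finite {c. (a, c) \<in> F}"
proof (rule finite_subset)
  show "{c. (a, c) \<in> F} \<subseteq> {1..l}"
    using assms unfolding grid_def by auto
qed simp

lemma strong_saturated_grid_column_before_occupied:
  assumes sat: "strong_saturated le (grid k l) F"
    and spread: "\<And>i p q. strong_emb le i (grid k l) \<Longrightarrow> \<not> neighboring (i p) (i q)"
    and "1 \<le> b" and empty: "\<And>c. (b, c) \<notin> F" and "(Suc b, c\<^sub>0) \<in> F"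
  shows False
proof -
  have "F \<subseteq> grid k l"
    using sat unfolding strong_saturated_def by blast
  define c where "c = Min {c. (Suc b, c) \<in> F}"
  have "finite {c. (Suc b, c) \<in> F}"
    using \<open>F \<subseteq> grid k l\<close> by (rule finite_grid_column)
  then have "(Suc b, c) \<in> F" and lowest: "\<And>c'. (Suc b, c') \<in> F \<Longrightarrow> c \<le> c'"
    unfolding c_def using \<open>(Suc b, c\<^sub>0) \<in> F\<close> Min_in by fastforce+
  show False
  proof (rule strong_saturated_no_exchange[OF sat])
    show "(b, c) \<in> grid k l - F"
      using \<open>(Suc b, c) \<in> F\<close> \<open>F \<subseteq> grid k l\<close> \<open>1 \<le> b\<close> empty unfolding grid_def by auto
    show "neighboring (b, c) (Suc b, c)"
      unfolding neighboring_def by simp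
    fix z assume z: "z \<in> F - {(Suc b, c)}"
    obtain x y where "z = (x, y)" by fastforce
    with z have "x \<noteq> b" and "x = Suc b \<Longrightarrow> c < y"
      using empty lowest[of y] by fastforce+
    with \<open>z = (x, y)\<close>
    show "(grid_le (b, c) z \<longleftrightarrow> grid_le (Suc b, c) z) \<and> (grid_le z (b, c) \<longleftrightarrow> grid_le z (Suc b, c))"
      unfolding grid_le_def by (cases "x = Suc b") auto
  qed (use spread \<open>(Suc b, c) \<in> F\<close> in auto)
qed

lemma strong_saturated_grid_column_after_occupied:
  assumes sat: "strong_saturated le (grid k l) F"
    and spread: "\<And>i p q. strong_emb le i (grid k l) \<Longrightarrow> \<not> neighboring (i p) (i q)"
    and "Suc b \<le> k" and empty: "\<And>c. (Suc b, c) \<notin> F" and "(b, c\<^sub>0) \<in> F"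
  shows False
proof -
  have "F \<subseteq> grid k l"
    using sat unfolding strong_saturated_def by blast
  define c where "c = Max {c. (b, c) \<in> F}"
  have "finite {c. (b, c) \<in> F}"
    using \<open>F \<subseteq> grid k l\<close> by (rule finite_grid_column)
  then have "(b, c) \<in> F" and highest: "\<And>c'. (b, c') \<in> F \<Longrightarrow> c' \<le> c"
    unfolding c_def using \<open>(b, c\<^sub>0) \<in> F\<close> Max_in by fastforce+
  show False
  proof (rule strong_saturated_no_exchange[OF sat])
    show "(Suc b, c) \<in> grid k l - F"
      using \<open>(b, c) \<in> F\<close> \<open>F \<subseteq> grid k l\<close> \<open>Suc b \<le> k\<close> empty unfolding grid_def by auto
    show "neighboring (Suc b, c) (b, c)"
      unfolding neighboring_def by simp
    fix z assume z: "z \<in> F - {(b, c)}"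
    obtain x y where "z = (x, y)" by fastforce
    with z have "x \<noteq> Suc b" and "x = b \<Longrightarrow> y < c"
      using empty highest[of y] by fastforce+
    with \<open>z = (x, y)\<close>
    show "(grid_le (Suc b, c) z \<longleftrightarrow> grid_le (b, c) z) \<and> (grid_le z (Suc b, c) \<longleftrightarrow> grid_le z (b, c))"
      unfolding grid_le_def by (cases "x = b") auto
  qed (use spread \<open>(b, c) \<in> F\<close> in auto)
qed

lemma ex_boundary_step_nat:
  assumes "m \<le> n" and "P m" and "\<not> P n"
  shows "\<exists>i. m \<le> i \<and> i < n \<and> P i \<and> \<not> P (Suc i)"
  using assms
proof (induction n rule: dec_induct)
  case (step n)
  then show ?case
    by (cases "P n") (auto intro: less_SucI)
qed simp

lemma strong_saturated_grid_column_occupied: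
  assumes sat: "strong_saturated le (grid k l) F"
    and spread: "\<And>i p q. strong_emb le i (grid k l) \<Longrightarrow> \<not> neighboring (i p) (i q)"
    and "F \<noteq> {}" and a: "a \<in> {1..k}"
  shows "\<exists>c. (a, c) \<in> F"
proof (rule ccontr)
  define occupied where "occupied t \<longleftrightarrow> (\<exists>c. (t, c) \<in> F)" for t
  assume "\<nexists>c. (a, c) \<in> F"
  then have "\<not> occupied a"
    unfolding occupied_def .
  obtain x\<^sub>0 c\<^sub>0 where "(x\<^sub>0, c\<^sub>0) \<in> F"
    using \<open>F \<noteq> {}\<close> by auto
  moreover have "F \<subseteq> grid k l"
    using sat unfolding strong_saturated_def by blast
  ultimately have "occupied x\<^sub>0" and x\<^sub>0: "x\<^sub>0 \<in> {1..k}"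
    unfolding occupied_def grid_def by auto
  with \<open>\<not> occupied a\<close> consider "a < x\<^sub>0" | "x\<^sub>0 < a"
    by (metis linorder_neqE_nat)
  then show False
  proof cases
    case 1
    then obtain b where "a \<le> b" "\<not> occupied b" "occupied (Suc b)"
      using ex_boundary_step_nat[of a x\<^sub>0 "\<lambda>t. \<not> occupied t"] \<open>\<not> occupied a\<close> \<open>occupied x\<^sub>0\<close> by auto
    moreover have "1 \<le> b"
      using \<open>a \<le> b\<close> a by simp
    ultimately show False
      using strong_saturated_grid_column_before_occupied[OF sat spread]
      unfolding occupied_def by blast
  next
    case 2
    then obtain b where "b < a" "occupied b" "\<not> occupied (Suc b)"
      using ex_boundary_step_nat[of x\<^sub>0 a occupied] \<open>\<not> occupied a\<close> \<open>occupied x\<^sub>0\<close> by auto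
    moreover have "Suc b \<le> k"
      using \<open>b < a\<close> a by simp
    ultimately show False
      using strong_saturated_grid_column_after_occupied[OF sat spread]
      unfolding occupied_def by blast
  qed
qed

lemma strong_saturated_nonempty:
  fixes le :: "'a \<Rightarrow> 'a \<Rightarrow> bool"
    and u v :: 'a
  assumes sat: "strong_saturated le Q F" and "x \<in> Q" and "u \<noteq> v"
  shows "F \<noteq> {}"
proof
  assume "F = {}"
  with sat \<open>x \<in> Q\<close> obtain i where "strong_emb le i {x}"
    unfolding strong_saturated_def contains_strong_copy_def by auto
  then have "inj i" and "range i \<subseteq> {x}"
    unfolding strong_emb_def by auto
  then have "i u = i v"
    using range_subsetD by (metis singletonD)
  with \<open>inj i\<close> \<open>u \<noteq> v\<close> show False
    by (meson injD)
qed

lemma strong_saturated_grid_card_ge: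
  fixes le :: "'a \<Rightarrow> 'a \<Rightarrow> bool"
  assumes sat: "strong_saturated le (grid k l) F"
    and spread: "\<And>i p q. strong_emb le i (grid k l) \<Longrightarrow> \<not> neighboring (i p) (i q)"
    and "u \<noteq> (v :: 'a)" and "1 \<le> l"
  shows "k \<le> card F"
proof (cases "k = 0")
  case False
  then have "(1, 1) \<in> grid k l"
    using \<open>1 \<le> l\<close> unfolding grid_def by simp
  then have "F \<noteq> {}"
    using strong_saturated_nonempty[OF sat _ \<open>u \<noteq> v\<close>] by blast
  then have "{1..k} \<subseteq> fst ` F"
    using strong_saturated_grid_column_occupied[OF sat spread] by force
  moreover have "finite F"
    using sat finite_grid unfolding strong_saturated_def by (blast intro: finite_subset)
  ultimately have "card {1..k} \<le> card (fst ` F)"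
    by (intro card_mono finite_imageI)
  also have "\<dots> \<le> card F"
    using \<open>finite F\<close> by (rule card_image_le)
  finally show ?thesis
    by simp
qed simp

lemma grid_le_swap [simp]: "grid_le (prod.swap x) (prod.swap y) \<longleftrightarrow> grid_le x y"
  unfolding grid_le_def by auto

lemma strong_emb_swap:
  assumes "strong_emb le i F"
  shows "strong_emb le (prod.swap \<circ> i) (prod.swap ` F)"
proof -
  have "inj (prod.swap \<circ> i)"
    using assms unfolding strong_emb_def by (simp add: inj_compose)
  moreover have "range (prod.swap \<circ> i) \<subseteq> prod.swap ` F"
    using assms unfolding strong_emb_def by (metis image_comp image_mono)
  ultimately show ?thesis
    using assms unfolding strong_emb_def by simp
qed

lemma contains_strong_copy_swap_iff:
  "contains_strong_copy le (prod.swap ` F) \<longleftrightarrow> contains_strong_copy le F"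
proof
  assume "contains_strong_copy le (prod.swap ` F)"
  then obtain i where "strong_emb le i (prod.swap ` F)"
    unfolding contains_strong_copy_def by blast
  then have "strong_emb le (prod.swap \<circ> i) F"
    using strong_emb_swap by (fastforce simp: image_comp)
  then show "contains_strong_copy le F"
    unfolding contains_strong_copy_def by blast
qed (auto simp: contains_strong_copy_def dest: strong_emb_swap)

lemma strong_saturated_swap:
  assumes "strong_saturated le Q F"
  shows "strong_saturated le (prod.swap ` Q) (prod.swap ` F)"
proof -
  have "contains_strong_copy le (insert x (prod.swap ` F))" if "x \<in> prod.swap ` Q - prod.swap ` F" for x
  proof -
    have "prod.swap x \<in> Q - F"
      using that by force
    then have "contains_strong_copy le (prod.swap ` insert (prod.swap x) F)"
      using assms contains_strong_copy_swap_iff unfolding strong_saturated_def by blast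
    then show ?thesis
      by simp
  qed
  with assms show ?thesis
    unfolding strong_saturated_def by (auto simp: contains_strong_copy_swap_iff)
qed

lemma grid_swap: "prod.swap ` grid k l = grid l k"
  unfolding grid_def by auto

theorem theorem1p10:
  fixes k l :: nat
  assumes dim2: "order_dim ((<) :: 'a::{finite,order} \<Rightarrow> 'a \<Rightarrow> bool) = 2"
    and no_nb: "\<And>k' l' (i :: 'a \<Rightarrow> nat \<times> nat) p q.
                 strong_emb (\<le>) i (grid k' l') \<Longrightarrow> \<not> neighboring (i p) (i q)"
    and "k \<ge> 1" and "l \<ge> 1"
  shows "max k l \<le> sat_star (grid k l) ((\<le>) :: 'a \<Rightarrow> 'a \<Rightarrow> bool)"
proof (rule sat_star_lower_bound)
  have "\<exists>u v :: 'a. u \<noteq> v"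
    using dim2 by (intro ex_distinct_if_order_dim_ge_2) simp
  then obtain u v :: 'a where "u \<noteq> v"
    by blast
  show "\<exists>F. strong_saturated (\<le>) (grid k l) F"
    by (rule ex_strong_saturated[OF finite_grid])
  fix F assume sat: "strong_saturated ((\<le>) :: 'a \<Rightarrow> 'a \<Rightarrow> bool) (grid k l) F"
  have "k \<le> card F"
    using strong_saturated_grid_card_ge[OF sat no_nb \<open>u \<noteq> v\<close> \<open>l \<ge> 1\<close>] .
  moreover
  have "strong_saturated ((\<le>) :: 'a \<Rightarrow> 'a \<Rightarrow> bool) (grid l k) (prod.swap ` F)"
    using strong_saturated_swap[OF sat] by (simp only: grid_swap)
  then have "l \<le> card (prod.swap ` F)"
    using no_nb \<open>u \<noteq> v\<close> \<open>k \<ge> 1\<close> by (rule strong_saturated_grid_card_ge)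
  ultimately show "max k l \<le> card F"
    by (simp add: card_image)
qed

end
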